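(* Consider the lattice Boltzmann scheme described in the context under acoustic scaling ($\lambda>0$ fixed as $\Delta x\to0$), with a prepared initialisation $w_i=\sum_{\mathfrak{e}\in\mathbb{Z}^d}w_{i,\mathfrak{e}}x^{\mathfrak{e}}$, $i\in\{1,\dots,q\}$, where each sequence $(w_{i,\mathfrak{e}})_{\mathfrak{e}}\subset\mathbb{R}$ has finite support. Set $$\omega^{(0)}_i=\sum_{\mathfrak{e}}w_{i,\mathfrak{e}},\qquad \omega^{(1)}_i=-\sum_{|\mathfrak{n}|=1}\Big(\sum_{\mathfrak{e}}w_{i,\mathfrak{e}}\mathfrak{e}^{\mathfrak{n}}\Big)\partial_x^{\mathfrak{n}},$$ so that $w_i$ applied to smooth functions expands as $\omega_i^{(0)}+\Delta x\,\omega_i^{(1)}+O(\Delta x^2)$. Then for every $n\in\mathbb{N}^*$ and $x\in\mathbb{R}^d$ the modified equation of the $n$-th starting scheme is \begin{align*} \phi(0,x)&+n\frac{\Delta x}{\lambda}\partial_t\phi(0,x)+O(\Delta x^2)=\omega^{(0)}_1\phi(0,x)\\ &-n\Delta x\Big(\mathcal{G}_{11}\omega^{(0)}_1+\sum_{r=2}^q\mathcal{G}_{1r}\omega^{(0)}_r+\frac1n\sum_{r=2}^q\mathcal{G}_{1r}(\epsilon_r\omega^{(0)}_1-\omega^{(0)}_r)\sum_{\ell=0}^{n-1}\pi_{n-\ell}(s_r)-\frac1n\omega^{(1)}_1\Big)\phi(0,x)+O(\Delta x^2), \end{align*} where $\pi_\ell(X)=1-(1-X)^\ell$.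
   Context: Fix $d\ge1$, $q\ge1$, velocities $c_1,\dots,c_q\in\mathbb{Z}^d$, invertible $M\in GL_q(\mathbb{R})$, $S=\mathrm{diag}(s_1,\dots,s_q)$ with $s_i\in(0,2]$ for $i\ge2$, $s_1\in\mathbb{R}$, $\epsilon\in\mathbb{R}^q$ with $\epsilon_1=1$, all independent of $\Delta x$; $K=I-S(I-\epsilon e_1^T)$. $\Delta t=\Delta x/\lambda$. Shifts $(x_\ell\phi)(x)=\phi(x-\Delta x e_\ell)$, multi-index notation $x^{\mathfrak{e}}=x_1^{\mathfrak{e}_1}\cdots x_d^{\mathfrak{e}_d}$, $\mathfrak{e}^{\mathfrak{n}}=\prod_\ell \mathfrak{e}_\ell^{\mathfrak{n}_\ell}$, $\partial_x^{\mathfrak{n}}=\prod_\ell\partial_{x_\ell}^{\mathfrak{n}_\ell}$. $T=M\mathrm{diag}(x^{c_1},\dots,x^{c_q})M^{-1}$, $E=TK$, time shift $(z\phi)(t)=\phi(t+\Delta t)$. $\mathcal{G}=M\mathrm{diag}(c_1\cdot\nabla,\dots,c_q\cdot\nabla)M^{-1}$. Initialisation $m(0,x)=w\,m_1^\circ(x)$ with $w$ a vector of Laurent polynomials in the shifts. The $n$-th starting scheme is $m_1(n\Delta t,x)=(E^nw)_1m_1^\circ(x)$; its modified equation is obtained by substituting a smooth $\phi$ for the unknowns in $(z^n\phi)(0,x)=((E^nw)_1\phi(0,\cdot))(x)$ and Taylor-expanding both sides in $\Delta x$. *)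

theory Defs
  imports "HOL-Analysis.Analysis" "HOL-Library.Landau_Symbols"
begin

fun Ck :: "nat \<Rightarrow> ('a::euclidean_space \<Rightarrow> real) \<Rightarrow> bool" where
  "Ck 0 f = continuous_on UNIV f"
| "Ck (Suc k) f = (f differentiable_on UNIV \<and>
      (\<forall>v. Ck k (\<lambda>y. frechet_derivative f (at y) v)))"

definition smooth_fun :: "('a::euclidean_space \<Rightarrow> real) \<Rightarrow> bool" where
  "smooth_fun f \<longleftrightarrow> (\<forall>k. Ck k f)"

definition dpart :: "(real^'d \<Rightarrow> real) \<Rightarrow> 'd \<Rightarrow> real^'d \<Rightarrow> real" where
  "dpart psi l y = frechet_derivative psi (at y) (axis l 1)"

definition dtime :: "(real \<times> (real^'d) \<Rightarrow> real) \<Rightarrow> real \<times> (real^'d) \<Rightarrow> real" where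
  "dtime phi p = frechet_derivative phi (at p) (1, 0)"

text \<open>Monomial x^e in the shifts: (x^e psi)(y) = psi(y - dx e).\<close>
definition shift :: "real \<Rightarrow> int^'d \<Rightarrow> (real^'d \<Rightarrow> real) \<Rightarrow> real^'d \<Rightarrow> real" where
  "shift dx e psi y = psi (y - dx *\<^sub>R (\<chi> l. of_int (e $ l)))"

text \<open>Laurent polynomial with finitely supported coefficients a, applied to psi.\<close>
definition laurent_app :: "real \<Rightarrow> (int^'d \<Rightarrow> real) \<Rightarrow> (real^'d \<Rightarrow> real) \<Rightarrow> real^'d \<Rightarrow> real" where
  "laurent_app dx a psi y = (\<Sum>e\<in>{e. a e \<noteq> 0}. a e * shift dx e psi y)"

text \<open>Relaxation matrix K = I - S (I - eps e_1^T).\<close>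
definition Kmat :: "(nat \<Rightarrow> real) \<Rightarrow> (nat \<Rightarrow> real) \<Rightarrow> nat \<Rightarrow> nat \<Rightarrow> real" where
  "Kmat s eps i j = (if i = j then 1 else 0)
      - s i * ((if i = j then 1 else 0) - eps i * (if j = 1 then 1 else 0))"

text \<open>T = M diag(x^{c_1},...,x^{c_q}) M^{-1}, acting on vectors of functions.\<close>
definition Top :: "nat \<Rightarrow> (nat \<Rightarrow> int^'d) \<Rightarrow> (nat \<Rightarrow> nat \<Rightarrow> real) \<Rightarrow> (nat \<Rightarrow> nat \<Rightarrow> real)
    \<Rightarrow> real \<Rightarrow> (nat \<Rightarrow> real^'d \<Rightarrow> real) \<Rightarrow> nat \<Rightarrow> real^'d \<Rightarrow> real" where
  "Top q c M Mi dx F i y =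
     (\<Sum>j\<in>{1..q}. \<Sum>k\<in>{1..q}. M i k * Mi k j * shift dx (c k) (F j) y)"

definition Kop :: "nat \<Rightarrow> (nat \<Rightarrow> real) \<Rightarrow> (nat \<Rightarrow> real)
    \<Rightarrow> (nat \<Rightarrow> real^'d \<Rightarrow> real) \<Rightarrow> nat \<Rightarrow> real^'d \<Rightarrow> real" where
  "Kop q s eps F i y = (\<Sum>j\<in>{1..q}. Kmat s eps i j * F j y)"

definition Eop :: "nat \<Rightarrow> (nat \<Rightarrow> int^'d) \<Rightarrow> (nat \<Rightarrow> nat \<Rightarrow> real) \<Rightarrow> (nat \<Rightarrow> nat \<Rightarrow> real)
    \<Rightarrow> (nat \<Rightarrow> real) \<Rightarrow> (nat \<Rightarrow> real) \<Rightarrow> real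
    \<Rightarrow> (nat \<Rightarrow> real^'d \<Rightarrow> real) \<Rightarrow> nat \<Rightarrow> real^'d \<Rightarrow> real" where
  "Eop q c M Mi s eps dx F = Top q c M Mi dx (Kop q s eps F)"

definition start_scheme :: "nat \<Rightarrow> (nat \<Rightarrow> int^'d) \<Rightarrow> (nat \<Rightarrow> nat \<Rightarrow> real) \<Rightarrow> (nat \<Rightarrow> nat \<Rightarrow> real)
    \<Rightarrow> (nat \<Rightarrow> real) \<Rightarrow> (nat \<Rightarrow> real) \<Rightarrow> (nat \<Rightarrow> int^'d \<Rightarrow> real) \<Rightarrow> nat \<Rightarrow> real
    \<Rightarrow> (real^'d \<Rightarrow> real) \<Rightarrow> real^'d \<Rightarrow> real" where
  "start_scheme q c M Mi s eps w n dx psi x =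
     ((Eop q c M Mi s eps dx ^^ n) (\<lambda>i. laurent_app dx (w i) psi)) 1 x"

definition omega0 :: "(nat \<Rightarrow> int^'d \<Rightarrow> real) \<Rightarrow> nat \<Rightarrow> real" where
  "omega0 w i = (\<Sum>e\<in>{e. w i e \<noteq> 0}. w i e)"

definition omega1 :: "(nat \<Rightarrow> int^'d \<Rightarrow> real) \<Rightarrow> nat \<Rightarrow> (real^'d \<Rightarrow> real) \<Rightarrow> real^'d \<Rightarrow> real" where
  "omega1 w i psi y = - (\<Sum>l\<in>UNIV. (\<Sum>e\<in>{e. w i e \<noteq> 0}. w i e * of_int (e $ l)) * dpart psi l y)"

text \<open>G = M diag(c_1 . grad, ..., c_q . grad) M^{-1}; entry (i,j) applied to psi.\<close>
definition Gop :: "nat \<Rightarrow> (nat \<Rightarrow> int^'d) \<Rightarrow> (nat \<Rightarrow> nat \<Rightarrow> real) \<Rightarrow> (nat \<Rightarrow> nat \<Rightarrow> real)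
    \<Rightarrow> nat \<Rightarrow> nat \<Rightarrow> (real^'d \<Rightarrow> real) \<Rightarrow> real^'d \<Rightarrow> real" where
  "Gop q c M Mi i j psi y =
     (\<Sum>k\<in>{1..q}. M i k * Mi k j * (\<Sum>l\<in>UNIV. of_int (c k $ l) * dpart psi l y))"

definition pi_poly :: "nat \<Rightarrow> real \<Rightarrow> real" where
  "pi_poly l X = 1 - (1 - X) ^ l"

end

theory Submission
  imports Defs
begin

text \<open>For every \<open>\<Delta>x\<close>, each component of \<open>E\<^sup>n w\<close> applied to \<open>\<psi>\<close> is a finite linear
  combination \<open>\<Sum> a\<^sub>k \<psi>(\<cdot> - \<Delta>x v\<^sub>k)\<close> of shifts of \<open>\<psi>\<close>. To first order in \<open>\<Delta>x\<close> such a
  combination is \<open>(\<Sum> a\<^sub>k) \<psi> - \<Delta>x D\<psi>(\<Sum> a\<^sub>k v\<^sub>k)\<close>, so only its mass and first moment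
  matter, and these obey a linear recursion. Since \<open>M M\<^sup>-\<^sup>1 = I\<close>, the transport \<open>T\<close> leaves masses
  unchanged and adds mass times \<open>c\<^sub>k\<close> to first moments, while \<open>K\<close> fixes the conserved first
  component and relaxes every other one geometrically towards \<open>\<epsilon>\<^sub>r\<close> times the first: after
  \<open>k\<close> steps the mass of component \<open>r \<ge> 2\<close> is \<open>\<omega>\<^sub>r + (\<epsilon>\<^sub>r \<omega>\<^sub>1 - \<omega>\<^sub>r) \<pi>\<^sub>k(s\<^sub>r)\<close>, with
  \<open>\<omega> = \<omega>\<^sup>(\<^sup>0\<^sup>)\<close>. Summing the increments of the first moment over the \<open>n\<close> steps gives the
  right-hand side; the left-hand side is the first-order Taylor expansion of \<open>\<phi>\<close> in time.\<close>

section \<open>First-order Taylor expansions\<close>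

lemma taylor_first_order_bigo:
  fixes g g' :: "real \<Rightarrow> real"
  assumes g': "\<And>t. (g has_real_derivative g' t) (at t)"
    and g'_diff: "g' differentiable (at 0)"
  shows "(\<lambda>h. g h - g 0 - h * g' 0) \<in> O[at_right 0](\<lambda>h. h\<^sup>2)"
proof -
  obtain L where "(g' has_real_derivative L) (at 0)"
    using g'_diff by (auto simp: real_differentiable_def)
  then have "((\<lambda>z. (g' z - g' 0) / z) \<longlongrightarrow> L) (at 0)"
    by (simp add: has_field_derivative_iff)
  then have "(\<lambda>z. g' z - g' 0) \<in> O[at 0](\<lambda>z. z)"
    by (rule bigoI_tendsto) (simp add: eventually_at_filter)
  then obtain C where "eventually (\<lambda>z. \<bar>g' z - g' 0\<bar> \<le> C * \<bar>z\<bar>) (at 0)"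
    by (auto elim: landau_o.bigE)
  then obtain d where d: "d > 0"
    and C: "\<And>z. z \<noteq> 0 \<Longrightarrow> \<bar>z\<bar> < d \<Longrightarrow> \<bar>g' z - g' 0\<bar> \<le> C * \<bar>z\<bar>"
    unfolding eventually_at dist_real_def by auto
  have "\<bar>g h - g 0 - h * g' 0\<bar> \<le> C * h\<^sup>2" if h: "0 < h" "h < d" for h
  proof -
    obtain z where z: "0 < z" "z < h" and mvt: "g h - g 0 = h * g' z"
      using MVT2[of 0 h g g'] g' h by auto
    have Cz: "\<bar>g' z - g' 0\<bar> \<le> C * z"
      using C[of z] z h by auto
    then have "0 \<le> C"
      using z by (smt (verit) zero_le_mult_iff)
    have "\<bar>g h - g 0 - h * g' 0\<bar> = h * \<bar>g' z - g' 0\<bar>"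
      using h by (simp add: mvt abs_mult flip: right_diff_distrib)
    also have "\<dots> \<le> h * (C * h)"
      using Cz z h \<open>0 \<le> C\<close> by (intro mult_left_mono order.trans[OF Cz]) auto
    finally show ?thesis by (simp add: power2_eq_square ac_simps)
  qed
  then show ?thesis
    by (intro bigoI[of _ C]) (auto simp: eventually_at_right_field intro!: exI[of _ d] d)
qed

definition twice_differentiable :: "('a::real_normed_vector \<Rightarrow> real) \<Rightarrow> bool" where
  "twice_differentiable f \<longleftrightarrow> (\<forall>y. f differentiable (at y)) \<and>
     (\<forall>v y. (\<lambda>z. frechet_derivative f (at z) v) differentiable (at y))"

lemma twice_differentiable_has_derivative:
  "twice_differentiable f \<Longrightarrow> (f has_derivative frechet_derivative f (at y)) (at y)"
  unfolding twice_differentiable_def using frechet_derivative_works by blast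

lemma twice_differentiable_linear:
  "twice_differentiable f \<Longrightarrow> linear (frechet_derivative f (at y))"
  using twice_differentiable_has_derivative has_derivative_linear by blast

lemma directional_taylor_bigo:
  assumes f: "twice_differentiable f"
  shows "(\<lambda>h. f (p + h *\<^sub>R v) - f p - h * frechet_derivative f (at p) v) \<in> O[at_right 0](\<lambda>h. h\<^sup>2)"
proof -
  let ?D = "\<lambda>z. frechet_derivative f (at z)"
  have "((\<lambda>t. f (p + t *\<^sub>R v)) has_real_derivative ?D (p + t *\<^sub>R v) v) (at t)" for t
  proof -
    have "(f has_derivative ?D (p + t *\<^sub>R v)) (at (p + t *\<^sub>R v))"
      by (rule twice_differentiable_has_derivative[OF f])
    moreover have "((\<lambda>t. p + t *\<^sub>R v) has_derivative (\<lambda>h. h *\<^sub>R v)) (at t)"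
      by (auto intro!: derivative_eq_intros)
    ultimately have "((\<lambda>t. f (p + t *\<^sub>R v)) has_derivative (\<lambda>h. ?D (p + t *\<^sub>R v) (h *\<^sub>R v))) (at t)"
      using has_derivative_compose by fastforce
    then have "((\<lambda>t. f (p + t *\<^sub>R v)) has_derivative (\<lambda>h. ?D (p + t *\<^sub>R v) v * h)) (at t)"
      by (simp add: linear_scale[OF twice_differentiable_linear[OF f]] mult.commute)
    then show ?thesis
      by (simp add: has_field_derivative_def)
  qed
  moreover have "(\<lambda>t. ?D (p + t *\<^sub>R v) v) differentiable (at 0)"
  proof -
    have "(\<lambda>t. p + t *\<^sub>R v) differentiable (at 0)"
      by (rule differentiableI, auto intro!: derivative_eq_intros)
    moreover have "(\<lambda>z. ?D z v) differentiable (at (p + 0 *\<^sub>R v))"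
      using f unfolding twice_differentiable_def by blast
    ultimately show ?thesis
      using differentiable_chain_at[of "\<lambda>t. p + t *\<^sub>R v" 0 "\<lambda>z. ?D z v"] by (simp add: o_def)
  qed
  ultimately show ?thesis
    using taylor_first_order_bigo[of "\<lambda>t. f (p + t *\<^sub>R v)" "\<lambda>t. ?D (p + t *\<^sub>R v) v"] by simp
qed

lemma smooth_fun_twice_differentiable:
  assumes "smooth_fun f"
  shows "twice_differentiable f"
proof -
  have "Ck 2 f"
    using assms unfolding smooth_fun_def by blast
  then show ?thesis
    by (auto simp: twice_differentiable_def differentiable_on_def numeral_2_eq_2)
qed

lemma slice_has_derivative:
  assumes "f differentiable (at (a, y))"
  shows "((\<lambda>y. f (a, y)) has_derivative (\<lambda>u. frechet_derivative f (at (a, y)) (0, u))) (at y)"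
proof -
  have "(f has_derivative frechet_derivative f (at (a, y))) (at (a, y))"
    using assms frechet_derivative_works by blast
  moreover have "((\<lambda>y. (a, y)) has_derivative (\<lambda>u. (0, u))) (at y)"
    by (auto intro!: derivative_eq_intros)
  ultimately show ?thesis
    using has_derivative_compose by fastforce
qed

lemma twice_differentiable_slice:
  fixes f :: "'a::real_normed_vector \<times> 'b::real_normed_vector \<Rightarrow> real"
  assumes f: "twice_differentiable f"
  shows "twice_differentiable (\<lambda>y. f (a, y))"
  unfolding twice_differentiable_def
proof (intro conjI allI)
  show "(\<lambda>y. f (a, y)) differentiable (at y)" for y
    using f slice_has_derivative unfolding twice_differentiable_def differentiable_def by blast
  fix v y :: 'b
  have D: "frechet_derivative (\<lambda>y. f (a, y)) (at z) v = frechet_derivative f (at (a, z)) (0, v)" for z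
    using f frechet_derivative_at[OF slice_has_derivative, of f a z] unfolding twice_differentiable_def
    by (metis (no_types))
  have "(\<lambda>y. (a, y)) differentiable (at y)"
    by (rule differentiableI, auto intro!: derivative_eq_intros)
  moreover have "(\<lambda>p. frechet_derivative f (at p) (0, v)) differentiable (at (a, y))"
    using f unfolding twice_differentiable_def by blast
  ultimately show "(\<lambda>z. frechet_derivative (\<lambda>y. f (a, y)) (at z) v) differentiable (at y)"
    using differentiable_chain_at[of "\<lambda>y. (a, y)" y "\<lambda>p. frechet_derivative f (at p) (0, v)"]
    by (simp add: D o_def)
qed

lemma dtime_taylor_bigo:
  fixes phi :: "real \<times> (real^'d) \<Rightarrow> real"
  assumes phi: "twice_differentiable phi"
  shows "(\<lambda>dx. phi (a * dx, x) - (phi (0, x) + a * dx * dtime phi (0, x))) \<in> O[at_right 0](\<lambda>dx. dx\<^sup>2)"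
proof -
  have "(\<lambda>h. phi ((0, x) + h *\<^sub>R (a, 0)) - phi (0, x) - h * frechet_derivative phi (at (0, x)) (a, 0))
      \<in> O[at_right 0](\<lambda>h. h\<^sup>2)"
    by (rule directional_taylor_bigo[OF phi])
  moreover have "frechet_derivative phi (at (0, x)) (a, 0) = a * dtime phi (0, x)"
    using linear_scale[OF twice_differentiable_linear[OF phi, of "(0, x)"], of a "(1, 0)"] by (simp add: dtime_def)
  ultimately show ?thesis
    by (simp add: algebra_simps)
qed

section \<open>Finite combinations of shifts\<close>

text \<open>\<open>shift_comb \<psi> F a b\<close>: \<open>F \<Delta>x = \<Sum> a\<^sub>k \<psi>(\<cdot> - \<Delta>x v\<^sub>k)\<close> for finitely many \<open>a\<^sub>k, v\<^sub>k\<close>, with mass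
  \<open>a = \<Sum> a\<^sub>k\<close> and first moment \<open>b = \<Sum> a\<^sub>k v\<^sub>k\<close>.\<close>

inductive shift_comb :: "('a::real_normed_vector \<Rightarrow> real) \<Rightarrow> (real \<Rightarrow> 'a \<Rightarrow> real) \<Rightarrow> real \<Rightarrow> 'a \<Rightarrow> bool"
  for \<psi> where
  zero: "shift_comb \<psi> (\<lambda>dx y. 0) 0 0"
| shift: "shift_comb \<psi> (\<lambda>dx y. \<psi> (y - dx *\<^sub>R v)) 1 v"
| add: "shift_comb \<psi> F a b \<Longrightarrow> shift_comb \<psi> G a' b' \<Longrightarrow>
    shift_comb \<psi> (\<lambda>dx y. F dx y + G dx y) (a + a') (b + b')"
| scale: "shift_comb \<psi> F a b \<Longrightarrow> shift_comb \<psi> (\<lambda>dx y. r * F dx y) (r * a) (r *\<^sub>R b)"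

lemma shift_comb_sum:
  assumes "finite S" "\<And>j. j \<in> S \<Longrightarrow> shift_comb \<psi> (F j) (a j) (b j)"
  shows "shift_comb \<psi> (\<lambda>dx y. \<Sum>j\<in>S. F j dx y) (\<Sum>j\<in>S. a j) (\<Sum>j\<in>S. b j)"
  using assms
proof (induction S rule: finite_induct)
  case empty
  then show ?case using shift_comb.zero by simp
next
  case (insert j S)
  then show ?case
    using shift_comb.add[OF insert.prems[of j] insert.IH] by simp
qed

lemma shift_comb_translate:
  assumes "shift_comb \<psi> F a b"
  shows "shift_comb \<psi> (\<lambda>dx y. F dx (y - dx *\<^sub>R u)) a (b + a *\<^sub>R u)"
  using assms
proof induction
  case zero
  then show ?case using shift_comb.zero by simp
next
  case (shift v)
  show ?case
    using shift_comb.shift[of \<psi> "v + u"] by (simp add: algebra_simps)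
next
  case (add F a b G a' b')
  show ?case
    using shift_comb.add[OF add.IH] by (simp add: algebra_simps)
next
  case (scale F a b r)
  show ?case
    using shift_comb.scale[OF scale.IH, of r] by (simp add: algebra_simps)
qed

lemma shift_comb_expansion:
  assumes "shift_comb \<psi> F a b" and \<psi>: "twice_differentiable \<psi>"
  shows "(\<lambda>dx. F dx x - (a * \<psi> x - dx * frechet_derivative \<psi> (at x) b)) \<in> O[at_right 0](\<lambda>dx. dx\<^sup>2)"
  using assms(1)
proof induction
  case zero
  then show ?case using linear_0[OF twice_differentiable_linear[OF \<psi>]] by simp
next
  case (shift v)
  have "(\<lambda>h. \<psi> (x + h *\<^sub>R - v) - \<psi> x - h * frechet_derivative \<psi> (at x) (- v)) \<in> O[at_right 0](\<lambda>h. h\<^sup>2)"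
    by (rule directional_taylor_bigo[OF \<psi>])
  then show ?case
    using linear_neg[OF twice_differentiable_linear[OF \<psi>]] by (simp add: algebra_simps)
next
  case (add F a b G a' b')
  have "(\<lambda>dx. (F dx x - (a * \<psi> x - dx * frechet_derivative \<psi> (at x) b))
      + (G dx x - (a' * \<psi> x - dx * frechet_derivative \<psi> (at x) b'))) \<in> O[at_right 0](\<lambda>dx. dx\<^sup>2)"
    by (rule sum_in_bigo(1)[OF add.IH])
  then show ?case
    using linear_add[OF twice_differentiable_linear[OF \<psi>]] by (simp add: algebra_simps)
next
  case (scale F a b r)
  have "(\<lambda>dx. r * (F dx x - (a * \<psi> x - dx * frechet_derivative \<psi> (at x) b))) \<in> O[at_right 0](\<lambda>dx. dx\<^sup>2)"
    using scale.IH by simp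
  then show ?case
    using linear_scale[OF twice_differentiable_linear[OF \<psi>]] by (simp add: algebra_simps)
qed

section \<open>Masses and first moments of the lattice Boltzmann scheme\<close>

definition of_int_vec :: "int^'d \<Rightarrow> real^'d" where
  "of_int_vec e = (\<chi> l. of_int (e $ l))"

definition initial_moment :: "(nat \<Rightarrow> int^'d \<Rightarrow> real) \<Rightarrow> nat \<Rightarrow> real^'d" where
  "initial_moment w i = (\<Sum>e\<in>{e. w i e \<noteq> 0}. w i e *\<^sub>R of_int_vec e)"

lemma shift_comb_laurent_app:
  assumes "finite {e. w i e \<noteq> 0}"
  shows "shift_comb \<psi> (\<lambda>dx. laurent_app dx (w i) \<psi>) (omega0 w i) (initial_moment w i)"
proof -
  have "shift_comb \<psi> (\<lambda>dx y. \<Sum>e\<in>{e. w i e \<noteq> 0}. w i e * \<psi> (y - dx *\<^sub>R of_int_vec e))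
          (\<Sum>e\<in>{e. w i e \<noteq> 0}. w i e * 1) (initial_moment w i)"
    unfolding initial_moment_def by (intro shift_comb_sum assms shift_comb.scale shift_comb.shift)
  then show ?thesis
    by (simp add: laurent_app_def[abs_def] shift_def of_int_vec_def omega0_def)
qed

lemma frechet_derivative_of_int_vec:
  assumes "linear (frechet_derivative \<psi> (at x))"
  shows "frechet_derivative \<psi> (at x) (of_int_vec e) = (\<Sum>l\<in>UNIV. of_int (e $ l) * dpart \<psi> l x)"
proof -
  have "of_int_vec e = (\<Sum>l\<in>UNIV. of_int (e $ l) *\<^sub>R axis l 1)"
    using basis_expansion[of "of_int_vec e"] by (simp add: of_int_vec_def scalar_mult_eq_scaleR)
  then show ?thesis
    using assms by (simp add: linear_sum linear_scale dpart_def)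
qed

lemma frechet_derivative_initial_moment:
  assumes "linear (frechet_derivative \<psi> (at x))"
  shows "frechet_derivative \<psi> (at x) (initial_moment w i) = - omega1 w i \<psi> x"
  using assms
  by (simp add: initial_moment_def omega1_def linear_sum linear_scale frechet_derivative_of_int_vec
      sum_distrib_left sum_distrib_right sum.swap[of _ UNIV] algebra_simps)

lemma Gop_eq_frechet_derivative:
  assumes "linear (frechet_derivative \<psi> (at x))"
  shows "Gop q c M Mi i j \<psi> x = (\<Sum>k\<in>{1..q}. M i k * Mi k j * frechet_derivative \<psi> (at x) (of_int_vec (c k)))"
  by (simp add: Gop_def frechet_derivative_of_int_vec[OF assms])

lemma sum_reflect_atLeastAtMost:
  fixes n :: nat and f :: "nat \<Rightarrow> 'a::comm_monoid_add"
  assumes "n \<ge> 1"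
  shows "(\<Sum>l\<in>{0..n-1}. f (n - l)) = (\<Sum>m\<in>{1..n}. f m)"
  using assms by (intro sum.reindex_bij_witness[of _ "\<lambda>m. n - m" "\<lambda>l. n - l"]) auto

locale lbm_scheme =
  fixes q :: nat and c :: "nat \<Rightarrow> int^'d" and M Mi :: "nat \<Rightarrow> nat \<Rightarrow> real"
    and s eps :: "nat \<Rightarrow> real"
begin

definition relax :: "(nat \<Rightarrow> 'a::real_vector) \<Rightarrow> nat \<Rightarrow> 'a" where
  "relax V i = (\<Sum>j\<in>{1..q}. Kmat s eps i j *\<^sub>R V j)"

text \<open>Mass and first moment of the components of \<open>E\<^sup>k\<close> applied to shift combinations with masses
  \<open>A\<close> and first moments \<open>B\<close>; the shift by \<open>c\<^sub>k\<close> inside \<open>T\<close> adds \<open>mass \<cdot> c\<^sub>k\<close> to the first moment.\<close>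

primrec mass :: "(nat \<Rightarrow> real) \<Rightarrow> nat \<Rightarrow> nat \<Rightarrow> real" where
  "mass A 0 = A"
| "mass A (Suc k) = (\<lambda>i. \<Sum>j\<in>{1..q}. \<Sum>k'\<in>{1..q}. M i k' * Mi k' j * relax (mass A k) j)"

primrec moment :: "(nat \<Rightarrow> real) \<Rightarrow> (nat \<Rightarrow> real^'d) \<Rightarrow> nat \<Rightarrow> nat \<Rightarrow> real^'d" where
  "moment A B 0 = B"
| "moment A B (Suc k) = (\<lambda>i. \<Sum>j\<in>{1..q}. \<Sum>k'\<in>{1..q}.
     (M i k' * Mi k' j) *\<^sub>R (relax (moment A B k) j + relax (mass A k) j *\<^sub>R of_int_vec (c k')))"

lemma shift_comb_Kop:
  assumes "\<forall>j\<in>{1..q}. shift_comb \<psi> (\<lambda>dx. F dx j) (a j) (b j)"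
  shows "shift_comb \<psi> (\<lambda>dx. Kop q s eps (F dx) i) (relax a i) (relax b i)"
proof -
  have "shift_comb \<psi> (\<lambda>dx y. \<Sum>j\<in>{1..q}. Kmat s eps i j * F dx j y)
      (\<Sum>j\<in>{1..q}. Kmat s eps i j * a j) (relax b i)"
    unfolding relax_def using assms by (intro shift_comb_sum shift_comb.scale) auto
  then show ?thesis
    by (simp add: Kop_def[abs_def] relax_def)
qed

lemma shift_comb_Top:
  assumes "\<forall>j\<in>{1..q}. shift_comb \<psi> (\<lambda>dx. F dx j) (a j) (b j)"
  shows "shift_comb \<psi> (\<lambda>dx. Top q c M Mi dx (F dx) i)
    (\<Sum>j\<in>{1..q}. \<Sum>k\<in>{1..q}. M i k * Mi k j * a j)
    (\<Sum>j\<in>{1..q}. \<Sum>k\<in>{1..q}. (M i k * Mi k j) *\<^sub>R (b j + a j *\<^sub>R of_int_vec (c k)))"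
  unfolding Top_def shift_def of_int_vec_def[symmetric] using assms
  by (intro shift_comb_sum finite_atLeastAtMost shift_comb.scale shift_comb_translate) auto

lemma shift_comb_Eop_power:
  assumes "\<forall>i\<in>{1..q}. finite {e. w i e \<noteq> 0}"
  shows "\<forall>i\<in>{1..q}. shift_comb \<psi> (\<lambda>dx. (Eop q c M Mi s eps dx ^^ k) (\<lambda>i. laurent_app dx (w i) \<psi>) i)
    (mass (omega0 w) k i) (moment (omega0 w) (initial_moment w) k i)"
proof (induction k)
  case 0
  then show ?case using assms by (simp add: shift_comb_laurent_app)
next
  case (Suc k)
  then show ?case
    unfolding funpow.simps o_def Eop_def mass.simps moment.simps
    by (intro ballI shift_comb_Top ballI shift_comb_Kop) blast
qed

end

locale lbm_conserving = lbm_scheme +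
  assumes q_pos: "q \<ge> 1"
    and M_Mi: "\<forall>i\<in>{1..q}. \<forall>j\<in>{1..q}. (\<Sum>k\<in>{1..q}. M i k * Mi k j) = (if i = j then 1 else 0)"
    and eps1: "eps 1 = 1"
begin

lemma M_Mi_apply:
  fixes V :: "nat \<Rightarrow> 'v::real_vector"
  assumes "i \<in> {1..q}"
  shows "(\<Sum>j\<in>{1..q}. \<Sum>k\<in>{1..q}. (M i k * Mi k j) *\<^sub>R V j) = V i"
proof -
  have "(\<Sum>j\<in>{1..q}. \<Sum>k\<in>{1..q}. (M i k * Mi k j) *\<^sub>R V j)
      = (\<Sum>j\<in>{1..q}. (\<Sum>k\<in>{1..q}. M i k * Mi k j) *\<^sub>R V j)"
    by (simp only: scaleR_sum_left)
  also have "\<dots> = (\<Sum>j\<in>{1..q}. if i = j then V j else 0)"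
    using M_Mi assms by (intro sum.cong) auto
  finally show ?thesis
    using assms by simp
qed

lemma relax_conserved: "relax V 1 = V 1"
proof -
  have "relax V 1 = (\<Sum>j\<in>{1..q}. if j = 1 then V j else 0)"
    unfolding relax_def using eps1 by (intro sum.cong) (auto simp: Kmat_def)
  then show ?thesis
    using q_pos by simp
qed

lemma relax_nonconserved:
  assumes "r \<in> {2..q}"
  shows "relax V r = (1 - s r) *\<^sub>R V r + (s r * eps r) *\<^sub>R V 1"
proof -
  have "relax V r = (\<Sum>j\<in>{1..q}. (if j = r then (1 - s r) *\<^sub>R V j else 0)
      + (if j = 1 then (s r * eps r) *\<^sub>R V j else 0))"
    unfolding relax_def using assms by (intro sum.cong) (auto simp: Kmat_def algebra_simps)
  then show ?thesis
    using assms by (simp add: sum.distrib)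
qed

lemma mass_Suc_eq_relax: "i \<in> {1..q} \<Longrightarrow> mass A (Suc k) i = relax (mass A k) i"
  using M_Mi_apply[of i "relax (mass A k)"] by simp

lemma mass_conserved: "mass A k 1 = A 1"
proof (induction k)
  case 0
  then show ?case by simp
next
  case (Suc k)
  have "mass A (Suc k) 1 = relax (mass A k) 1"
    using q_pos by (intro mass_Suc_eq_relax) simp
  then show ?case
    using Suc.IH by (simp only: relax_conserved)
qed

lemma mass_nonconserved:
  assumes r: "r \<in> {2..q}"
  shows "mass A k r = A r + (eps r * A 1 - A r) * pi_poly k (s r)"
proof (induction k)
  case 0
  then show ?case by (simp add: pi_poly_def)
next
  case (Suc k)
  have "mass A (Suc k) r = relax (mass A k) r"
    using r by (intro mass_Suc_eq_relax) simp
  also have "\<dots> = (1 - s r) * mass A k r + s r * eps r * mass A k 1"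
    using relax_nonconserved[OF r, of "mass A k"] by simp
  also have "\<dots> = (1 - s r) * mass A k r + s r * eps r * A 1"
    by (simp only: mass_conserved)
  finally show ?case
    by (simp add: Suc.IH pi_poly_def algebra_simps)
qed

lemma mass_weighted_sum:
  "(\<Sum>j\<in>{1..q}. mass A k j * G j) = G 1 * A 1 + (\<Sum>r\<in>{2..q}. G r * A r)
     + (\<Sum>r\<in>{2..q}. G r * (eps r * A 1 - A r) * pi_poly k (s r))"
proof -
  have "(\<Sum>j\<in>{1..q}. mass A k j * G j) = mass A k 1 * G 1 + (\<Sum>r\<in>{2..q}. mass A k r * G r)"
    using sum.atLeast_Suc_atMost[of 1 q] q_pos by (simp add: numeral_2_eq_2)
  also have "\<dots> = A 1 * G 1 + (\<Sum>r\<in>{2..q}. (A r + (eps r * A 1 - A r) * pi_poly k (s r)) * G r)"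
    by (simp only: mass_conserved mass_nonconserved cong: sum.cong)
  also have "\<dots> = G 1 * A 1 + (\<Sum>r\<in>{2..q}. G r * A r + G r * (eps r * A 1 - A r) * pi_poly k (s r))"
    by (simp add: algebra_simps)
  finally show ?thesis
    by (simp only: sum.distrib add.assoc)
qed

lemma moment_Suc_conserved:
  "moment A B (Suc k) 1 = moment A B k 1
     + (\<Sum>j\<in>{1..q}. \<Sum>k'\<in>{1..q}. (M 1 k' * Mi k' j * mass A (Suc k) j) *\<^sub>R of_int_vec (c k'))"
proof -
  have one: "1 \<in> {1..q}"
    using q_pos by simp
  have "moment A B (Suc k) 1 = (\<Sum>j\<in>{1..q}. \<Sum>k'\<in>{1..q}. (M 1 k' * Mi k' j) *\<^sub>R relax (moment A B k) j)
     + (\<Sum>j\<in>{1..q}. \<Sum>k'\<in>{1..q}. (M 1 k' * Mi k' j) *\<^sub>R relax (mass A k) j *\<^sub>R of_int_vec (c k'))"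
    by (simp add: scaleR_add_right sum.distrib)
  also have "(\<Sum>j\<in>{1..q}. \<Sum>k'\<in>{1..q}. (M 1 k' * Mi k' j) *\<^sub>R relax (moment A B k) j) = moment A B k 1"
    using M_Mi_apply[OF one, of "relax (moment A B k)"] relax_conserved[of "moment A B k"] by simp
  also have "(\<Sum>j\<in>{1..q}. \<Sum>k'\<in>{1..q}. (M 1 k' * Mi k' j) *\<^sub>R relax (mass A k) j *\<^sub>R of_int_vec (c k'))
      = (\<Sum>j\<in>{1..q}. \<Sum>k'\<in>{1..q}. (M 1 k' * Mi k' j * mass A (Suc k) j) *\<^sub>R of_int_vec (c k'))"
    by (intro sum.cong refl) (simp add: mass_Suc_eq_relax del: mass.simps(2))
  finally show ?thesis .
qed

lemma frechet_derivative_moment_Suc: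
  assumes D: "linear (frechet_derivative \<psi> (at x))"
  shows "frechet_derivative \<psi> (at x) (moment A B (Suc k) 1) = frechet_derivative \<psi> (at x) (moment A B k 1)
    + (\<Sum>j\<in>{1..q}. mass A (Suc k) j * Gop q c M Mi 1 j \<psi> x)"
proof -
  have "frechet_derivative \<psi> (at x) (moment A B (Suc k) 1) = frechet_derivative \<psi> (at x) (moment A B k 1)
    + (\<Sum>j\<in>{1..q}. \<Sum>k'\<in>{1..q}. M 1 k' * Mi k' j * mass A (Suc k) j
        * frechet_derivative \<psi> (at x) (of_int_vec (c k')))"
    unfolding moment_Suc_conserved by (simp add: linear_add[OF D] linear_sum[OF D] linear_scale[OF D])
  also have "\<dots> = frechet_derivative \<psi> (at x) (moment A B k 1)
    + (\<Sum>j\<in>{1..q}. mass A (Suc k) j * Gop q c M Mi 1 j \<psi> x)"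
    by (simp add: Gop_eq_frechet_derivative[OF D] sum_distrib_left ac_simps del: mass.simps(2))
  finally show ?thesis .
qed

lemma frechet_derivative_moment:
  assumes D: "linear (frechet_derivative \<psi> (at x))"
  defines "G r \<equiv> Gop q c M Mi 1 r \<psi> x"
  shows "frechet_derivative \<psi> (at x) (moment A B n 1) = frechet_derivative \<psi> (at x) (B 1)
    + real n * (G 1 * A 1 + (\<Sum>r\<in>{2..q}. G r * A r))
    + (\<Sum>r\<in>{2..q}. G r * (eps r * A 1 - A r) * (\<Sum>m\<in>{1..n}. pi_poly m (s r)))"
proof (induction n)
  case 0
  then show ?case by simp
next
  case (Suc n)
  have "(\<Sum>r\<in>{2..q}. G r * (eps r * A 1 - A r) * (\<Sum>m\<in>{1..Suc n}. pi_poly m (s r)))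
    = (\<Sum>r\<in>{2..q}. G r * (eps r * A 1 - A r) * (\<Sum>m\<in>{1..n}. pi_poly m (s r)))
      + (\<Sum>r\<in>{2..q}. G r * (eps r * A 1 - A r) * pi_poly (Suc n) (s r))"
    by (simp add: distrib_left sum.distrib)
  then show ?case
    unfolding frechet_derivative_moment_Suc[OF D] Suc.IH mass_weighted_sum G_def
    by (simp add: algebra_simps)
qed

lemma start_scheme_expansion:
  assumes w: "\<forall>i\<in>{1..q}. finite {e. w i e \<noteq> 0}" and \<psi>: "twice_differentiable \<psi>"
  shows "(\<lambda>dx. start_scheme q c M Mi s eps w n dx \<psi> x - (omega0 w 1 * \<psi> x
     - dx * frechet_derivative \<psi> (at x) (moment (omega0 w) (initial_moment w) n 1)))
     \<in> O[at_right 0](\<lambda>dx. dx\<^sup>2)"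
proof -
  have "1 \<in> {1..q}"
    using q_pos by simp
  then have "shift_comb \<psi> (\<lambda>dx. (Eop q c M Mi s eps dx ^^ n) (\<lambda>i. laurent_app dx (w i) \<psi>) 1)
      (mass (omega0 w) n 1) (moment (omega0 w) (initial_moment w) n 1)"
    using shift_comb_Eop_power[OF w, of \<psi> n] by blast
  then have "shift_comb \<psi> (\<lambda>dx. start_scheme q c M Mi s eps w n dx \<psi>)
      (omega0 w 1) (moment (omega0 w) (initial_moment w) n 1)"
    unfolding mass_conserved start_scheme_def[abs_def] .
  then show ?thesis
    by (rule shift_comb_expansion[OF _ \<psi>])
qed

lemma start_scheme_modified_equation:
  assumes w: "\<forall>i\<in>{1..q}. finite {e. w i e \<noteq> 0}" and \<psi>: "twice_differentiable \<psi>" and n: "n \<ge> 1"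
  shows "(\<lambda>dx. start_scheme q c M Mi s eps w n dx \<psi> x
       - (omega0 w 1 * \<psi> x
          - real n * dx *
             (Gop q c M Mi 1 1 \<psi> x * omega0 w 1
              + (\<Sum>r\<in>{2..q}. Gop q c M Mi 1 r \<psi> x * omega0 w r)
              + 1 / real n * (\<Sum>r\<in>{2..q}. Gop q c M Mi 1 r \<psi> x
                    * (eps r * omega0 w 1 - omega0 w r)
                    * (\<Sum>l\<in>{0..n-1}. pi_poly (n - l) (s r)))
              - 1 / real n * omega1 w 1 \<psi> x)))
       \<in> O[at_right 0](\<lambda>dx. dx ^ 2)" (is "(\<lambda>dx. _ - (_ - real n * dx * ?R)) \<in> _")
proof -
  have D: "linear (frechet_derivative \<psi> (at x))"
    by (rule twice_differentiable_linear[OF \<psi>])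
  have reflect: "(\<Sum>l\<in>{0..n-1}. pi_poly (n - l) X) = (\<Sum>m\<in>{1..n}. pi_poly m X)" for X
    using sum_reflect_atLeastAtMost[OF n, of "\<lambda>m. pi_poly m X"] by simp
  have "frechet_derivative \<psi> (at x) (moment (omega0 w) (initial_moment w) n 1) = real n * ?R"
    using n unfolding frechet_derivative_moment[OF D] frechet_derivative_initial_moment[OF D] reflect
    by (simp add: field_simps)
  then have scaled: "dx * frechet_derivative \<psi> (at x) (moment (omega0 w) (initial_moment w) n 1)
      = real n * dx * ?R" for dx
    by (simp only: mult.assoc mult.left_commute)
  show ?thesis
    using start_scheme_expansion[OF w \<psi>, of n x] unfolding scaled .
qed

end

theorem proposition2:
  fixes q :: nat and c :: "nat \<Rightarrow> int^'d"
    and M Mi :: "nat \<Rightarrow> nat \<Rightarrow> real"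
    and s eps :: "nat \<Rightarrow> real" and lam :: real
    and w :: "nat \<Rightarrow> int^'d \<Rightarrow> real"
    and n :: nat and x :: "real^'d"
    and phi :: "real \<times> (real^'d) \<Rightarrow> real"
  assumes q_pos: "q \<ge> 1"
    and M_inv1: "\<forall>i\<in>{1..q}. \<forall>j\<in>{1..q}. (\<Sum>k\<in>{1..q}. M i k * Mi k j) = (if i = j then 1 else 0)"
    and M_inv2: "\<forall>i\<in>{1..q}. \<forall>j\<in>{1..q}. (\<Sum>k\<in>{1..q}. Mi i k * M k j) = (if i = j then 1 else 0)"
    and s_range: "\<forall>i\<in>{2..q}. 0 < s i \<and> s i \<le> 2"
    and eps1: "eps 1 = 1"
    and lam_pos: "lam > 0"
    and w_fin: "\<forall>i\<in>{1..q}. finite {e. w i e \<noteq> 0}"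
    and n_pos: "n \<ge> 1"
    and phi_smooth: "smooth_fun phi"
  shows
   "(\<lambda>dx. phi (real n * dx / lam, x)
          - (phi (0, x) + real n * dx / lam * dtime phi (0, x)))
       \<in> O[at_right 0](\<lambda>dx. dx ^ 2)
    \<and>
    (\<lambda>dx. start_scheme q c M Mi s eps w n dx (\<lambda>y. phi (0, y)) x
       - (omega0 w 1 * phi (0, x)
          - real n * dx *
             (Gop q c M Mi 1 1 (\<lambda>y. phi (0, y)) x * omega0 w 1
              + (\<Sum>r\<in>{2..q}. Gop q c M Mi 1 r (\<lambda>y. phi (0, y)) x * omega0 w r)
              + 1 / real n * (\<Sum>r\<in>{2..q}. Gop q c M Mi 1 r (\<lambda>y. phi (0, y)) x
                    * (eps r * omega0 w 1 - omega0 w r)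
                    * (\<Sum>l\<in>{0..n-1}. pi_poly (n - l) (s r)))
              - 1 / real n * omega1 w 1 (\<lambda>y. phi (0, y)) x)))
       \<in> O[at_right 0](\<lambda>dx. dx ^ 2)"
proof -
  interpret lbm_conserving q c M Mi s eps
    using q_pos M_inv1 eps1 by unfold_locales
  have phi: "twice_differentiable phi"
    using phi_smooth by (rule smooth_fun_twice_differentiable)
  show ?thesis
    using dtime_taylor_bigo[OF phi, of "real n / lam" x]
      start_scheme_modified_equation[OF w_fin twice_differentiable_slice[OF phi] n_pos, where x = x]
    by simp
qed

end
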